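(* Let $\alpha_0,\alpha_1,\alpha_2\in\mathbb{C}$ with $\alpha_0+\alpha_1+\alpha_2=3$, and let $\tau_0,\tau_1,\tau_2$ be nonvanishing (meromorphic) functions of $x$. Define $$f_i=\frac{\tau_{i+1}'}{\tau_{i+1}}-\frac{\tau_{i+2}'}{\tau_{i+2}}+x\quad(i=0,1,2),\qquad g=\frac{\tau_0'}{\tau_0}+\frac{\tau_1'}{\tau_1}+\frac{\tau_2'}{\tau_2}.$$ Then $(f_0,f_1,f_2)$ satisfies $f_i'+f_i(f_{i+1}-f_{i+2})=\alpha_i$ for $i=0,1,2$ (with $f_0+f_1+f_2=3x$) and $g$ satisfies $2g'+(f_0-x)^2+(f_1-x)^2+(f_2-x)^2=0$ if and only if $$\Big(D_x^2-xD_x-\frac{\alpha_i-\alpha_{i+1}}{3}\Big)\,\tau_i\cdot\tau_{i+1}=0\qquad(i=0,1,2).$$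
   Context: Indices are taken modulo 3 and $'=d/dx$. Hirota's bilinear operators are defined by $P(D_x)\,F\cdot G=P(\partial_y)\big(F(x+y)G(x-y)\big)\big|_{y=0}$ for a constant-coefficient polynomial $P$; thus $D_xF\cdot G=F'G-FG'$ and $D_x^2F\cdot G=F''G-2F'G'+FG''$. *)

theory Defs
  imports "HOL-Complex_Analysis.Complex_Analysis"
begin

definition hirota_D1 :: "(complex \<Rightarrow> complex) \<Rightarrow> (complex \<Rightarrow> complex) \<Rightarrow> complex \<Rightarrow> complex" where
  "hirota_D1 F G x = deriv F x * G x - F x * deriv G x"

definition hirota_D2 :: "(complex \<Rightarrow> complex) \<Rightarrow> (complex \<Rightarrow> complex) \<Rightarrow> complex \<Rightarrow> complex" where
  "hirota_D2 F G x = (deriv ^^ 2) F x * G x - 2 * deriv F x * deriv G x + F x * (deriv ^^ 2) G x"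

definition fP :: "(nat \<Rightarrow> complex \<Rightarrow> complex) \<Rightarrow> nat \<Rightarrow> complex \<Rightarrow> complex" where
  "fP \<tau> i x = deriv (\<tau> ((i + 1) mod 3)) x / \<tau> ((i + 1) mod 3) x
             - deriv (\<tau> ((i + 2) mod 3)) x / \<tau> ((i + 2) mod 3) x + x"

definition gP :: "(nat \<Rightarrow> complex \<Rightarrow> complex) \<Rightarrow> complex \<Rightarrow> complex" where
  "gP \<tau> x = (\<Sum>i<3. deriv (\<tau> i) x / \<tau> i x)"

end

theory Submission imports Defs begin

text \<open>Write \<open>l\<^sub>i = \<tau>\<^sub>i'/\<tau>\<^sub>i\<close>. Dividing the bilinear equation for \<open>(\<tau>\<^sub>i, \<tau>\<^sub>i\<^sub>+\<^sub>1)\<close> by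
  \<open>\<tau>\<^sub>i \<tau>\<^sub>i\<^sub>+\<^sub>1\<close> turns it into \<open>B\<^sub>i = 0\<close>, where
  \<open>B\<^sub>i = l\<^sub>i' + l\<^sub>i\<^sub>+\<^sub>1' + (l\<^sub>i - l\<^sub>i\<^sub>+\<^sub>1)\<^sup>2 - x (l\<^sub>i - l\<^sub>i\<^sub>+\<^sub>1) - (\<alpha>\<^sub>i - \<alpha>\<^sub>i\<^sub>+\<^sub>1)/3\<close>.
  Since \<open>f\<^sub>i = l\<^sub>i\<^sub>+\<^sub>1 - l\<^sub>i\<^sub>+\<^sub>2 + x\<close>, the \<open>i\<close>-th equation of the symmetric Painleve IV system
  reads \<open>B\<^sub>i - B\<^sub>i\<^sub>-\<^sub>1 = 0\<close> (this uses \<open>\<alpha>\<^sub>0 + \<alpha>\<^sub>1 + \<alpha>\<^sub>2 = 3\<close>) and the equation for \<open>g\<close>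
  reads \<open>B\<^sub>0 + B\<^sub>1 + B\<^sub>2 = 0\<close>; together they say that every \<open>B\<^sub>i\<close> vanishes.\<close>

definition log_deriv :: "(complex \<Rightarrow> complex) \<Rightarrow> complex \<Rightarrow> complex" where
  "log_deriv f x = deriv f x / f x"

lemma holomorphic_on_log_deriv:
  assumes "f holomorphic_on S" "open S" "\<forall>x\<in>S. f x \<noteq> 0"
  shows "log_deriv f holomorphic_on S"
  unfolding log_deriv_def[abs_def]
  using assms by (intro holomorphic_intros holomorphic_deriv) auto

lemma deriv_log_deriv:
  assumes "f holomorphic_on S" "open S" "x \<in> S" "f x \<noteq> 0"
  shows "deriv (log_deriv f) x = deriv (deriv f) x / f x - log_deriv f x ^ 2"
proof -
  have "(deriv f has_field_derivative deriv (deriv f) x) (at x)"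
    using assms by (meson holomorphic_deriv holomorphic_derivI)
  moreover have "(f has_field_derivative deriv f x) (at x)"
    using assms by (meson holomorphic_derivI)
  ultimately have "(log_deriv f has_field_derivative
      (deriv (deriv f) x * f x - deriv f x * deriv f x) / (f x * f x)) (at x)"
    unfolding log_deriv_def[abs_def] using assms(4) by (rule DERIV_divide)
  then show ?thesis
    using assms(4) by (simp add: DERIV_imp_deriv log_deriv_def field_simps power2_eq_square)
qed

lemma hirota_D1_log_deriv:
  assumes "F x \<noteq> 0" "G x \<noteq> 0"
  shows "hirota_D1 F G x = F x * G x * (log_deriv F x - log_deriv G x)"
  using assms by (simp add: hirota_D1_def log_deriv_def field_simps)

lemma hirota_D2_log_deriv:
  assumes "F x \<noteq> 0" "G x \<noteq> 0"
  shows "hirota_D2 F G x = F x * G x *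
    ((deriv (deriv F) x / F x - log_deriv F x ^ 2) + (deriv (deriv G) x / G x - log_deriv G x ^ 2)
      + (log_deriv F x - log_deriv G x) ^ 2)"
  using assms
  by (simp add: hirota_D2_def log_deriv_def numeral_2_eq_2 field_simps power2_eq_square)

lemma hirota_bilinear_log_deriv:
  assumes "F holomorphic_on S" "G holomorphic_on S" "open S" "x \<in> S" "F x \<noteq> 0" "G x \<noteq> 0"
  shows "hirota_D2 F G x - x * hirota_D1 F G x - c * (F x * G x) = F x * G x *
    (deriv (log_deriv F) x + deriv (log_deriv G) x + (log_deriv F x - log_deriv G x)\<^sup>2
      - x * (log_deriv F x - log_deriv G x) - c)"
  using assms(5,6)
  by (simp add: hirota_D1_log_deriv hirota_D2_log_deriv algebra_simps
      deriv_log_deriv[OF assms(1,3,4,5)] deriv_log_deriv[OF assms(2,3,4,6)])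

lemma fP_log_deriv:
  "fP \<tau> i = (\<lambda>x. log_deriv (\<tau> ((i + 1) mod 3)) x - log_deriv (\<tau> ((i + 2) mod 3)) x + x)"
  by (simp add: fun_eq_iff fP_def log_deriv_def)

lemma gP_log_deriv: "gP \<tau> = (\<lambda>x. \<Sum>k<3. log_deriv (\<tau> k) x)"
  by (simp add: fun_eq_iff gP_def log_deriv_def)

lemma fP_sum: "fP \<tau> 0 x + fP \<tau> 1 x + fP \<tau> 2 x = 3 * x"
  by (simp add: fP_def)

lemma
  assumes "open S" "\<forall>k<3. \<tau> k holomorphic_on S" "\<forall>k<3. \<forall>x\<in>S. \<tau> k x \<noteq> 0" "x \<in> S"
  shows deriv_fP: "deriv (fP \<tau> i) x =
      deriv (log_deriv (\<tau> ((i + 1) mod 3))) x - deriv (log_deriv (\<tau> ((i + 2) mod 3))) x + 1"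
    and deriv_gP: "deriv (gP \<tau>) x = (\<Sum>k<3. deriv (log_deriv (\<tau> k)) x)"
proof -
  have "(log_deriv (\<tau> k) has_field_derivative deriv (log_deriv (\<tau> k)) x) (at x)" if "k < 3" for k
    using assms that by (meson holomorphic_derivI holomorphic_on_log_deriv)
  then show "deriv (fP \<tau> i) x =
      deriv (log_deriv (\<tau> ((i + 1) mod 3))) x - deriv (log_deriv (\<tau> ((i + 2) mod 3))) x + 1"
    and "deriv (gP \<tau>) x = (\<Sum>k<3. deriv (log_deriv (\<tau> k)) x)"
    unfolding fP_log_deriv gP_log_deriv
    by (auto intro!: DERIV_imp_deriv derivative_eq_intros)
qed

lemma cyclic_system_iff_bilinear:
  fixes l0 l1 l2 L0 L1 L2 x a0 a1 a2 :: "'a::field_char_0"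
  assumes "a0 + a1 + a2 = 3"
  defines "f0 \<equiv> l1 - l2 + x" and "f1 \<equiv> l2 - l0 + x" and "f2 \<equiv> l0 - l1 + x"
  defines "B0 \<equiv> L0 + L1 + (l0 - l1)\<^sup>2 - x * (l0 - l1) - (a0 - a1) / 3"
    and "B1 \<equiv> L1 + L2 + (l1 - l2)\<^sup>2 - x * (l1 - l2) - (a1 - a2) / 3"
    and "B2 \<equiv> L2 + L0 + (l2 - l0)\<^sup>2 - x * (l2 - l0) - (a2 - a0) / 3"
  shows "(L1 - L2 + 1 + f0 * (f1 - f2) = a0 \<and> L2 - L0 + 1 + f1 * (f2 - f0) = a1
          \<and> L0 - L1 + 1 + f2 * (f0 - f1) = a2
          \<and> 2 * (L0 + L1 + L2) + ((f0 - x)\<^sup>2 + (f1 - x)\<^sup>2 + (f2 - x)\<^sup>2) = 0)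
     \<longleftrightarrow> B0 = 0 \<and> B1 = 0 \<and> B2 = 0"
proof -
  have a0: "a0 = 3 - a1 - a2"
    using assms(1) by (simp add: algebra_simps eq_diff_eq)
  have e0: "L1 - L2 + 1 + f0 * (f1 - f2) - a0 = B0 - B2"
    unfolding f0_def f1_def f2_def B0_def B2_def a0
    by (simp add: field_simps power2_eq_square; simp add: algebra_simps)
  have e1: "L2 - L0 + 1 + f1 * (f2 - f0) - a1 = B1 - B0"
    unfolding f0_def f1_def f2_def B0_def B1_def a0
    by (simp add: field_simps power2_eq_square; simp add: algebra_simps)
  have e2: "L0 - L1 + 1 + f2 * (f0 - f1) - a2 = B2 - B1"
    unfolding f0_def f1_def f2_def B1_def B2_def a0
    by (simp add: field_simps power2_eq_square; simp add: algebra_simps)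
  have g: "2 * (L0 + L1 + L2) + ((f0 - x)\<^sup>2 + (f1 - x)\<^sup>2 + (f2 - x)\<^sup>2) = B0 + B1 + B2"
    unfolding f0_def f1_def f2_def B0_def B1_def B2_def
    by (simp add: field_simps power2_eq_square; simp add: algebra_simps)
  have "(B0 - B2 = 0 \<and> B1 - B0 = 0 \<and> B2 - B1 = 0 \<and> B0 + B1 + B2 = 0) \<longleftrightarrow> B0 = 0 \<and> B1 = 0 \<and> B2 = 0"
    by auto
  then show ?thesis
    unfolding e0[symmetric] e1[symmetric] e2[symmetric] g[symmetric] by simp
qed

lemma all_less_3_nat: "(\<forall>i<3. P i) \<longleftrightarrow> P (0::nat) \<and> P 1 \<and> P 2"
  by (auto simp: numeral_3_eq_3 numeral_2_eq_2 less_Suc_eq)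

lemma painleve_iff_bilinear_at:
  fixes \<alpha> :: "nat \<Rightarrow> complex" and \<tau> :: "nat \<Rightarrow> complex \<Rightarrow> complex"
  assumes "\<alpha> 0 + \<alpha> 1 + \<alpha> 2 = 3" "open S" "\<forall>k<3. \<tau> k holomorphic_on S"
    "\<forall>k<3. \<forall>x\<in>S. \<tau> k x \<noteq> 0" "x \<in> S"
  shows "((\<forall>i<3. deriv (fP \<tau> i) x
              + fP \<tau> i x * (fP \<tau> ((i + 1) mod 3) x - fP \<tau> ((i + 2) mod 3) x) = \<alpha> i)
          \<and> 2 * deriv (gP \<tau>) x + (\<Sum>i<3. (fP \<tau> i x - x)\<^sup>2) = 0)
     \<longleftrightarrow> (\<forall>i<3. hirota_D2 (\<tau> i) (\<tau> ((i + 1) mod 3)) x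
          - x * hirota_D1 (\<tau> i) (\<tau> ((i + 1) mod 3)) x
          - (\<alpha> i - \<alpha> ((i + 1) mod 3)) / 3 * (\<tau> i x * \<tau> ((i + 1) mod 3) x) = 0)"
proof -
  define l where "l k = log_deriv (\<tau> k) x" for k
  define L where "L k = deriv (log_deriv (\<tau> k)) x" for k
  have bilinear: "hirota_D2 (\<tau> i) (\<tau> j) x - x * hirota_D1 (\<tau> i) (\<tau> j) x - c * (\<tau> i x * \<tau> j x) = 0
      \<longleftrightarrow> L i + L j + (l i - l j)\<^sup>2 - x * (l i - l j) - c = 0" if "i < 3" "j < 3" for i j c
    unfolding L_def l_def using assms that
    by (simp add: hirota_bilinear_log_deriv[of "\<tau> i" S "\<tau> j"])
  have mods: "(0 + 1) mod 3 = (1::nat)" "(0 + 2) mod 3 = (2::nat)" "(1 + 1) mod 3 = (2::nat)"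
      "(1 + 2) mod 3 = (0::nat)" "(2 + 1) mod 3 = (0::nat)" "(2 + 2) mod 3 = (1::nat)"
    by simp_all
  have f: "fP \<tau> i x = l ((i + 1) mod 3) - l ((i + 2) mod 3) + x" for i
    by (simp add: fP_log_deriv l_def)
  have d: "deriv (fP \<tau> i) x = L ((i + 1) mod 3) - L ((i + 2) mod 3) + 1" for i
    unfolding L_def using assms(2-5) by (rule deriv_fP)
  have g: "deriv (gP \<tau>) x = L 0 + L 1 + L 2"
    unfolding L_def using assms(2-5) by (simp add: deriv_gP numeral_3_eq_3 numeral_2_eq_2)
  have sq: "(\<Sum>i<3. (fP \<tau> i x - x)\<^sup>2) = (fP \<tau> 0 x - x)\<^sup>2 + (fP \<tau> 1 x - x)\<^sup>2 + (fP \<tau> 2 x - x)\<^sup>2"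
    by (simp add: numeral_3_eq_3 numeral_2_eq_2)
  have bilinear_iff: "(\<forall>i<3. hirota_D2 (\<tau> i) (\<tau> ((i + 1) mod 3)) x
          - x * hirota_D1 (\<tau> i) (\<tau> ((i + 1) mod 3)) x
          - (\<alpha> i - \<alpha> ((i + 1) mod 3)) / 3 * (\<tau> i x * \<tau> ((i + 1) mod 3) x) = 0)
    \<longleftrightarrow> (L 0 + L 1 + (l 0 - l 1)\<^sup>2 - x * (l 0 - l 1) - (\<alpha> 0 - \<alpha> 1) / 3 = 0
        \<and> L 1 + L 2 + (l 1 - l 2)\<^sup>2 - x * (l 1 - l 2) - (\<alpha> 1 - \<alpha> 2) / 3 = 0
        \<and> L 2 + L 0 + (l 2 - l 0)\<^sup>2 - x * (l 2 - l 0) - (\<alpha> 2 - \<alpha> 0) / 3 = 0)"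
    unfolding all_less_3_nat mods by (intro conj_cong bilinear) simp_all
  show ?thesis
    unfolding bilinear_iff all_less_3_nat sq conj_assoc
    unfolding f d g mods
    by (rule cyclic_system_iff_bilinear[OF assms(1)])
qed

theorem theorem3p1:
  fixes \<alpha> :: "nat \<Rightarrow> complex" and \<tau> :: "nat \<Rightarrow> complex \<Rightarrow> complex" and S :: "complex set"
  assumes "\<alpha> 0 + \<alpha> 1 + \<alpha> 2 = 3"
    and "open S"
    and "\<forall>i<3. \<tau> i holomorphic_on S"
    and "\<forall>i<3. \<forall>x\<in>S. \<tau> i x \<noteq> 0"
  shows "((\<forall>i<3. \<forall>x\<in>S. deriv (fP \<tau> i) x
              + fP \<tau> i x * (fP \<tau> ((i + 1) mod 3) x - fP \<tau> ((i + 2) mod 3) x) = \<alpha> i)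
          \<and> (\<forall>x\<in>S. fP \<tau> 0 x + fP \<tau> 1 x + fP \<tau> 2 x = 3 * x)
          \<and> (\<forall>x\<in>S. 2 * deriv (gP \<tau>) x + (\<Sum>i<3. (fP \<tau> i x - x)^2) = 0))
     \<longleftrightarrow> (\<forall>i<3. \<forall>x\<in>S.
            hirota_D2 (\<tau> i) (\<tau> ((i + 1) mod 3)) x
          - x * hirota_D1 (\<tau> i) (\<tau> ((i + 1) mod 3)) x
          - (\<alpha> i - \<alpha> ((i + 1) mod 3)) / 3 * (\<tau> i x * \<tau> ((i + 1) mod 3) x) = 0)"
  using painleve_iff_bilinear_at[OF assms] fP_sum by blast

end
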